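(* Let $X$ be a non-empty finite set and $\mathcal{P}$ a partition of $X$. Let $s$ be the number of distinct sizes of blocks of $\mathcal{P}$, and let $r$ be the number of sizes $m$ such that $\mathcal{P}$ has at least two blocks of size $m$. Then $\operatorname{rank}(T(X,\mathcal{P}):\Sigma(X,\mathcal{P}))=\binom{s}{2}+r$.
   Context: $T(X,\mathcal{P})$ is the semigroup (under composition) of maps $f:X\to X$ such that for every block $P$ of $\mathcal{P}$ there is a block $Q$ with $Pf\subseteq Q$; $\Sigma(X,\mathcal{P})$ is the subsemigroup of those $f\in T(X,\mathcal{P})$ whose image intersects every block of $\mathcal{P}$. For a subsemigroup $U$ of a semigroup $V$, the relative rank $\operatorname{rank}(V:U)$ is the least cardinality of a subset $W\subseteq V$ such that $U\cup W$ generates $V$ as a semigroup. *)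

theory Defs
  imports Main "HOL-Library.FuncSet" "HOL-Library.Disjoint_Sets"
begin

text \<open>Maps X -> X are represented as extensional functions (value undefined outside X),
so that distinct maps are distinct HOL functions. Composition is the restricted
composition from FuncSet.\<close>

definition T_part :: "'a set \<Rightarrow> 'a set set \<Rightarrow> ('a \<Rightarrow> 'a) set" where
  "T_part X P = {f \<in> X \<rightarrow>\<^sub>E X. \<forall>B\<in>P. \<exists>C\<in>P. f ` B \<subseteq> C}"

definition Sigma_part :: "'a set \<Rightarrow> 'a set set \<Rightarrow> ('a \<Rightarrow> 'a) set" where
  "Sigma_part X P = {f \<in> T_part X P. \<forall>B\<in>P. f ` X \<inter> B \<noteq> {}}"

inductive_set sgen :: "'a set \<Rightarrow> ('a \<Rightarrow> 'a) set \<Rightarrow> ('a \<Rightarrow> 'a) set"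
  for X :: "'a set" and S :: "('a \<Rightarrow> 'a) set" where
  base: "f \<in> S \<Longrightarrow> f \<in> sgen X S"
| comp: "f \<in> sgen X S \<Longrightarrow> g \<in> sgen X S \<Longrightarrow> compose X g f \<in> sgen X S"

text \<open>Relative rank rank(V:U): least cardinality of W \<subseteq> V with U \<union> W generating V.
(Used here only for finite X, so V is finite and W ranges over finite sets.)\<close>
definition relrank :: "'a set \<Rightarrow> ('a \<Rightarrow> 'a) set \<Rightarrow> ('a \<Rightarrow> 'a) set \<Rightarrow> nat" where
  "relrank X V U = (LEAST n. \<exists>W. W \<subseteq> V \<and> finite W \<and> card W = n \<and> sgen X (U \<union> W) = V)"

end

theory Submission
  imports Defs "HOL-Combinatorics.Transposition"
begin

text \<open>
  A map \<open>f \<in> T(X,\<P>)\<close> induces a map on the blocks of \<open>\<P>\<close>, and \<open>f \<in> \<Sigma>(X,\<P>)\<close> exactly when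
  this block map is a permutation. Call a map that sends a block \<open>U\<close> into another block \<open>C\<close>
  and fixes all other points a merge of \<open>U\<close> into \<open>C\<close>, and call \<open>{|B|, |B'|}\<close> the type of a
  pair of distinct blocks \<open>B, B'\<close>.

  Upper bound: by induction on the number of blocks missed by \<open>f\<close>, every \<open>f \<in> T(X,\<P>)\<close> is a
  product of elements of \<open>\<Sigma>(X,\<P>)\<close> and merges; and every merge of \<open>U\<close> into \<open>C\<close> is
  \<open>\<sigma> e R \<sigma>'\<close> with \<open>\<sigma>, \<sigma>' \<in> \<Sigma>(X,\<P>)\<close>, \<open>R\<close> a permutation of \<open>X\<close> permuting the blocks, and \<open>e\<close> a
  fixed injective merge of a block into a block of the same two sizes \<open>{|U|, |C|}\<close>. So one
  generator per such size type suffices, and there are \<open>(s choose 2) + r\<close> types.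

  Lower bound: suppose a product of elements of \<open>\<Sigma>(X,\<P>) \<union> W\<close> is injective on every block and
  all pairs of distinct blocks it identifies have the same type \<open>t\<close>. The factor applied first either
  lies outside \<open>\<Sigma>(X,\<P>)\<close>, and then it has the same property, or it lies in \<open>\<Sigma>(X,\<P>)\<close>; then,
  being injective on blocks, it is a bijection of \<open>X\<close> mapping blocks onto blocks of the same
  size, so the remaining factors have the property. Hence \<open>W\<close> contains a map of this kind for
  every type \<open>t\<close>, and distinct types need distinct maps.
\<close>

section \<open>Bijections and orbits of finite maps\<close>

lemma extend_inj_on_to_bij_betw:
  assumes "finite C" "finite D" "card C = card D" "A \<subseteq> C" "inj_on g A" "g ` A \<subseteq> D"
  shows "\<exists>\<theta>. bij_betw \<theta> C D \<and> (\<forall>a\<in>A. \<theta> a = g a)"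
proof -
  have "finite A" using assms(1,4) finite_subset by blast
  then have "card (C - A) = card (D - g ` A)"
    using assms by (simp add: card_Diff_subset card_image)
  then obtain k where k: "bij_betw k (C - A) (D - g ` A)"
    using assms(1,2) finite_same_card_bij finite_Diff by metis
  define \<theta> where "\<theta> x = (if x \<in> A then g x else k x)" for x
  have "bij_betw \<theta> A (g ` A)"
    using assms(5) by (auto simp: \<theta>_def bij_betw_def inj_on_def)
  moreover have "bij_betw \<theta> (C - A) (D - g ` A)"
    using k by (rule bij_betw_cong[THEN iffD1, rotated]) (simp add: \<theta>_def)
  ultimately have "bij_betw \<theta> (A \<union> (C - A)) (g ` A \<union> (D - g ` A))"
    by (rule bij_betw_combine) blast
  moreover have "A \<union> (C - A) = C" "g ` A \<union> (D - g ` A) = D"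
    using assms(4,6) by blast+
  ultimately show ?thesis
    by (auto simp: \<theta>_def)
qed

lemma funpow_orbit_repeats:
  assumes "finite S" "\<phi> ` S \<subseteq> S" "D \<in> S"
  shows "\<exists>i j. i < j \<and> (\<phi> ^^ i) D = (\<phi> ^^ j) D"
proof -
  have orbit: "(\<phi> ^^ n) D \<in> S" for n
    by (induction n) (use assms in auto)
  have "\<not> inj_on (\<lambda>n. (\<phi> ^^ n) D) {0..card S}"
  proof
    assume "inj_on (\<lambda>n. (\<phi> ^^ n) D) {0..card S}"
    then have "card {0..card S} \<le> card S"
      using card_inj_on_le[OF _ _ assms(1)] orbit by blast
    then show False
      by simp
  qed
  then obtain m n where "m \<noteq> n" "(\<phi> ^^ m) D = (\<phi> ^^ n) D"
    unfolding inj_on_def by blast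
  then show ?thesis
    by (metis linorder_neqE_nat)
qed

lemma image_funpow_tail:
  assumes "i < j" "(\<phi> ^^ i) D = (\<phi> ^^ j) D"
  shows "\<phi> ` {(\<phi> ^^ n) D | n. i \<le> n} = {(\<phi> ^^ n) D | n. i \<le> n}"
proof
  show "\<phi> ` {(\<phi> ^^ n) D | n. i \<le> n} \<subseteq> {(\<phi> ^^ n) D | n. i \<le> n}"
  proof
    fix z assume "z \<in> \<phi> ` {(\<phi> ^^ n) D | n. i \<le> n}"
    then obtain n where "i \<le> n" "z = (\<phi> ^^ Suc n) D"
      by auto
    then show "z \<in> {(\<phi> ^^ n) D | n. i \<le> n}"
      using le_SucI by blast
  qed
  show "{(\<phi> ^^ n) D | n. i \<le> n} \<subseteq> \<phi> ` {(\<phi> ^^ n) D | n. i \<le> n}"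
  proof
    fix z assume "z \<in> {(\<phi> ^^ n) D | n. i \<le> n}"
    then obtain n where n: "i \<le> n" "z = (\<phi> ^^ n) D"
      by auto
    obtain m where "i \<le> m" "z = (\<phi> ^^ Suc m) D"
    proof (cases "n = i")
      case True
      then show ?thesis
        using that[of "j - 1"] assms n by simp
    next
      case False
      then show ?thesis
        using that[of "n - 1"] n by simp
    qed
    then show "z \<in> \<phi> ` {(\<phi> ^^ n) D | n. i \<le> n}"
      by auto
  qed
qed

lemma exists_invariant_subset_entered:
  assumes "finite S" "\<phi> ` S \<subseteq> S" "D \<in> S - \<phi> ` S"
  shows "\<exists>Z U. Z \<subseteq> S \<and> \<phi> ` Z = Z \<and> U \<in> S - Z \<and> \<phi> U \<in> Z"
proof -
  have orbit: "(\<phi> ^^ n) D \<in> S" for n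
    by (induction n) (use assms in auto)
  have step: "(\<phi> ^^ k) D = \<phi> ((\<phi> ^^ (k - 1)) D)" if "k \<noteq> 0" for k
  proof -
    have "(\<phi> ^^ k) D = (\<phi> ^^ Suc (k - 1)) D"
      using that by simp
    then show ?thesis
      by simp
  qed
  define i where "i = (LEAST i. \<exists>j>i. (\<phi> ^^ i) D = (\<phi> ^^ j) D)"
  obtain j where j: "i < j" "(\<phi> ^^ i) D = (\<phi> ^^ j) D"
    using LeastI_ex[of "\<lambda>i. \<exists>j>i. (\<phi> ^^ i) D = (\<phi> ^^ j) D"]
      funpow_orbit_repeats[OF assms(1,2)] assms(3)
    unfolding i_def by blast
  have "i \<noteq> 0"
  proof
    assume "i = 0"
    then have "D = \<phi> ((\<phi> ^^ (j - 1)) D)"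
      using j step[of j] by simp
    then show False
      using assms(3) orbit by blast
  qed
  define Z where "Z = {(\<phi> ^^ n) D | n. i \<le> n}"
  have "(\<phi> ^^ (i - 1)) D \<notin> Z"
  proof
    assume "(\<phi> ^^ (i - 1)) D \<in> Z"
    then obtain n where n: "i \<le> n" "(\<phi> ^^ (i - 1)) D = (\<phi> ^^ n) D"
      by (auto simp: Z_def)
    have "i - 1 < i" "i - 1 < n"
      using \<open>i \<noteq> 0\<close> n(1) by linarith+
    then show False
      using not_less_Least[of "i - 1" "\<lambda>i. \<exists>j>i. (\<phi> ^^ i) D = (\<phi> ^^ j) D"] n(2)
      unfolding i_def by blast
  qed
  moreover have "\<phi> ((\<phi> ^^ (i - 1)) D) \<in> Z"
    using step[OF \<open>i \<noteq> 0\<close>] unfolding Z_def by (intro CollectI exI[of _ i]) simp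
  moreover have "Z \<subseteq> S"
    using orbit by (auto simp: Z_def)
  ultimately show ?thesis
    using image_funpow_tail[OF j] orbit[of "i - 1"] unfolding Z_def[symmetric]
    by (intro exI[of _ Z] exI[of _ "(\<phi> ^^ (i - 1)) D"]) simp
qed

lemma image_permute_invariant_part:
  assumes "Z \<subseteq> S" "\<phi> ` Z = Z"
  shows "(\<lambda>B. if B \<in> Z then \<phi> B else B) ` S = S"
proof -
  let ?\<psi> = "\<lambda>B. if B \<in> Z then \<phi> B else B"
  have "?\<psi> ` S = ?\<psi> ` (Z \<union> (S - Z))"
    using assms(1) by (simp add: Un_absorb1)
  also have "\<dots> = ?\<psi> ` Z \<union> ?\<psi> ` (S - Z)"
    by (rule image_Un)
  also have "?\<psi> ` Z = \<phi> ` Z"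
    by (rule image_cong) simp_all
  also have "?\<psi> ` (S - Z) = (\<lambda>B. B) ` (S - Z)"
    by (rule image_cong) simp_all
  finally show ?thesis
    using assms by (simp add: Un_absorb1)
qed

lemma image_redirect:
  assumes Z: "Z \<subseteq> S" "\<phi> ` Z = Z" and U: "U \<in> S - Z" "\<phi> U \<in> Z"
  shows "(\<lambda>B. if B \<in> Z then B else if B = U then D else \<phi> B) ` S = insert D (\<phi> ` S)"
    (is "?\<psi> ` S = _")
proof
  show "?\<psi> ` S \<subseteq> insert D (\<phi> ` S)"
  proof
    fix E assume "E \<in> ?\<psi> ` S"
    then obtain B where B: "B \<in> S" "E = ?\<psi> B"
      by blast
    have "B \<in> \<phi> ` S" if "B \<in> Z"
      using that Z by blast
    then show "E \<in> insert D (\<phi> ` S)"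
      using B by auto
  qed
  show "insert D (\<phi> ` S) \<subseteq> ?\<psi> ` S"
  proof
    fix E assume "E \<in> insert D (\<phi> ` S)"
    then consider "E = D" | B where "B \<in> S" "E = \<phi> B"
      by blast
    then show "E \<in> ?\<psi> ` S"
    proof cases
      case 1
      then have "E = ?\<psi> U"
        using U by simp
      then show ?thesis
        using U(1) by (rule image_eqI[OF _ DiffD1])
    next
      case 2
      show ?thesis
      proof (cases "B \<in> Z \<or> B = U")
        case True
        then have "E \<in> Z"
          using 2 Z(2) U(2) by blast
        then have "E = ?\<psi> E" "E \<in> S"
          using Z(1) by auto
        then show ?thesis
          by (rule image_eqI)
      next
        case False
        then have "E = ?\<psi> B"
          using 2 by simp
        then show ?thesis
          using 2(1) by (rule image_eqI)
      qed
    qed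
  qed
qed

lemma exists_bij_betw_mapping_into:
  assumes "finite C" "finite D" "card C = card D" "S \<subseteq> C" "Q \<subseteq> D" "card S \<le> card Q"
  shows "\<exists>\<theta>. bij_betw \<theta> C D \<and> \<theta> ` S \<subseteq> Q"
proof -
  have fin: "finite S" "finite Q"
    using assms finite_subset by blast+
  obtain j where j: "inj_on j S" "j ` S \<subseteq> Q"
    using card_le_inj[OF fin assms(6)] by blast
  then obtain \<theta> where "bij_betw \<theta> C D" "\<forall>s\<in>S. \<theta> s = j s"
    using extend_inj_on_to_bij_betw[OF assms(1-4)] assms(5) by blast
  then show ?thesis
    using j(2) by (metis image_cong)
qed

lemma exists_bij_betw_image_nested:
  assumes "finite U" "finite C" "\<phi> ` U \<subseteq> C" "inj_on h U" "inj_on h C"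
    and nested: "h ` U \<subseteq> h ` C \<or> h ` C \<subseteq> h ` U"
  shows "\<exists>\<theta>. bij_betw \<theta> C (h ` C) \<and> \<theta> ` \<phi> ` U \<subseteq> h ` U"
proof -
  have "card (\<phi> ` U) \<le> card U" "card (\<phi> ` U) \<le> card C"
    using card_image_le[OF assms(1)] card_mono[OF assms(2,3)] by simp_all
  moreover have "card (h ` U) = card U" "card (h ` C) = card C"
    using card_image assms(4,5) by blast+
  ultimately have "card (\<phi> ` U) \<le> card (h ` U \<inter> h ` C)"
    using nested by (metis Int_absorb1 Int_absorb2)
  moreover have "h ` U \<inter> h ` C \<subseteq> h ` C"
    by blast
  ultimately obtain \<theta> where "bij_betw \<theta> C (h ` C)" "\<theta> ` \<phi> ` U \<subseteq> h ` U \<inter> h ` C"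
    using exists_bij_betw_mapping_into[OF assms(2) finite_imageI[OF assms(2)]
        card_image[OF assms(5), symmetric] assms(3)] by blast
  then show ?thesis
    by blast
qed

lemma image_compose: "A \<subseteq> S \<Longrightarrow> compose S g f ` A = g ` f ` A"
  by (auto simp: compose_eq subset_iff image_iff)

lemma redirect_eq_iff:
  "a \<noteq> b \<Longrightarrow> (if x = a then b else x) = (if y = a then b else y) \<longleftrightarrow> x = y \<or> x \<in> {a, b} \<and> y \<in> {a, b}"
  by auto

lemma card_transpose: "card a = card b \<Longrightarrow> card (transpose a b c) = card c"
  by (simp add: transpose_def)

section \<open>Blocks and block maps\<close>

locale finite_partition =
  fixes X :: "'a set" and P :: "'a set set"
  assumes finite_X: "finite X" and partition: "partition_on X P"
begin

definition block :: "'a \<Rightarrow> 'a set" where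
  "block x = (THE B. B \<in> P \<and> x \<in> B)"

definition rep :: "'a set \<Rightarrow> 'a" where
  "rep B = (SOME x. x \<in> B)"

definition block_map :: "('a \<Rightarrow> 'a) \<Rightarrow> 'a set \<Rightarrow> 'a set" where
  "block_map f B = block (f (rep B))"

lemma finite_P: "finite P"
  using finite_elements[OF finite_X partition] .

lemma P_subset: "B \<in> P \<Longrightarrow> B \<subseteq> X"
  using partition_onD1[OF partition] by blast

lemma finite_part: "B \<in> P \<Longrightarrow> finite B"
  using P_subset finite_X finite_subset by blast

lemma part_nonempty: "B \<in> P \<Longrightarrow> B \<noteq> {}"
  using partition_onD3[OF partition] by blast

lemma parts_eq: "B \<in> P \<Longrightarrow> C \<in> P \<Longrightarrow> x \<in> B \<Longrightarrow> x \<in> C \<Longrightarrow> B = C"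
  using partition_onD2[OF partition] unfolding disjoint_def by blast

lemma block_eqI: "B \<in> P \<Longrightarrow> x \<in> B \<Longrightarrow> block x = B"
  unfolding block_def by (rule the_equality) (use parts_eq in blast)+

lemma block_in_P: "x \<in> X \<Longrightarrow> block x \<in> P"
  and in_block: "x \<in> X \<Longrightarrow> x \<in> block x"
proof -
  assume "x \<in> X"
  then obtain B where "B \<in> P" "x \<in> B"
    using partition_onD1[OF partition] by blast
  then show "block x \<in> P" "x \<in> block x"
    using block_eqI by simp_all
qed

lemma block_eq_iff: "B \<in> P \<Longrightarrow> x \<in> X \<Longrightarrow> block x = B \<longleftrightarrow> x \<in> B"
  using block_eqI in_block by blast

lemma block_subset: "x \<in> X \<Longrightarrow> block x \<subseteq> X"
  using P_subset block_in_P by blast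

lemma rep_in: "B \<in> P \<Longrightarrow> rep B \<in> B"
  unfolding rep_def using part_nonempty by (simp add: some_in_eq)

lemma rep_in_X: "B \<in> P \<Longrightarrow> rep B \<in> X"
  using rep_in P_subset by blast

lemma block_rep: "B \<in> P \<Longrightarrow> block (rep B) = B"
  using rep_in block_eqI by blast

lemma T_part_PiE: "f \<in> T_part X P \<Longrightarrow> f \<in> X \<rightarrow>\<^sub>E X"
  by (simp add: T_part_def)

lemma T_part_in_X: "f \<in> T_part X P \<Longrightarrow> x \<in> X \<Longrightarrow> f x \<in> X"
  by (auto simp: T_part_def)

lemma T_part_block:
  assumes "f \<in> T_part X P" "x \<in> X"
  shows "block (f x) = block_map f (block x)"
proof -
  obtain C where C: "C \<in> P" "f ` block x \<subseteq> C"
    using assms block_in_P unfolding T_part_def by blast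
  then have "f x \<in> C" "f (rep (block x)) \<in> C"
    using assms(2) in_block rep_in block_in_P by blast+
  then show ?thesis
    unfolding block_map_def using C(1) block_eqI by simp
qed

lemma block_map_in_P: "f \<in> T_part X P \<Longrightarrow> B \<in> P \<Longrightarrow> block_map f B \<in> P"
  unfolding block_map_def using block_in_P T_part_in_X rep_in_X by blast

lemma image_part_subset_block_map:
  assumes "f \<in> T_part X P" "B \<in> P"
  shows "f ` B \<subseteq> block_map f B"
proof
  fix y assume "y \<in> f ` B"
  then obtain x where x: "x \<in> B" "y = f x" by blast
  then have "x \<in> X" "block x = B"
    using assms(2) P_subset block_eqI by blast+
  then show "y \<in> block_map f B"
    using T_part_block[OF assms(1)] in_block T_part_in_X[OF assms(1)] x(2) by metis
qed

lemma T_partI: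
  assumes "f \<in> X \<rightarrow>\<^sub>E X" and "\<And>x. x \<in> X \<Longrightarrow> block (f x) = \<psi> (block x)"
  shows "f \<in> T_part X P" and "B \<in> P \<Longrightarrow> block_map f B = \<psi> B"
proof -
  have "f ` B \<subseteq> \<psi> B" and "\<psi> B \<in> P" if B: "B \<in> P" for B
  proof -
    have "f x \<in> \<psi> B" if "x \<in> B" for x
    proof -
      have "x \<in> X" "block x = B"
        using that B P_subset block_eqI by blast+
      then show ?thesis
        using assms in_block PiE_mem by metis
    qed
    then show "f ` B \<subseteq> \<psi> B" by blast
    have "\<psi> B = block (f (rep B))"
      using assms(2) rep_in_X block_rep B by simp
    then show "\<psi> B \<in> P"
      using assms(1) rep_in_X B block_in_P PiE_mem by metis
  qed
  then show "f \<in> T_part X P"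
    using assms(1) unfolding T_part_def by blast
  show "B \<in> P \<Longrightarrow> block_map f B = \<psi> B"
    unfolding block_map_def using assms(2) rep_in_X block_rep by simp
qed

lemma Sigma_part_iff: "f \<in> Sigma_part X P \<longleftrightarrow> f \<in> T_part X P \<and> block_map f ` P = P"
proof -
  have "(\<forall>B\<in>P. f ` X \<inter> B \<noteq> {}) \<longleftrightarrow> P \<subseteq> block_map f ` P" if f: "f \<in> T_part X P"
  proof
    assume hit: "\<forall>B\<in>P. f ` X \<inter> B \<noteq> {}"
    show "P \<subseteq> block_map f ` P"
    proof
      fix B assume "B \<in> P"
      then obtain x where "x \<in> X" "f x \<in> B" using hit by blast
      then have "B = block (f x)"
        using \<open>B \<in> P\<close> block_eqI by simp
      then have "B = block_map f (block x)"
        using T_part_block[OF f \<open>x \<in> X\<close>] by simp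
      then show "B \<in> block_map f ` P" using \<open>x \<in> X\<close> block_in_P by blast
    qed
  next
    assume sub: "P \<subseteq> block_map f ` P"
    show "\<forall>B\<in>P. f ` X \<inter> B \<noteq> {}"
    proof
      fix B assume "B \<in> P"
      then obtain E where E: "E \<in> P" "B = block_map f E"
        using sub by blast
      have "f (rep E) \<in> B"
        using E T_part_block[OF f rep_in_X[OF E(1)]] block_rep[OF E(1)]
          in_block[OF T_part_in_X[OF f rep_in_X[OF E(1)]]] by simp
      then show "f ` X \<inter> B \<noteq> {}"
        using rep_in_X[OF E(1)] by blast
    qed
  qed
  moreover have "block_map f ` P \<subseteq> P" if "f \<in> T_part X P"
    using that block_map_in_P by blast
  ultimately show ?thesis
    unfolding Sigma_part_def by blast
qed

lemma Sigma_part_iff_inj: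
  assumes "f \<in> T_part X P"
  shows "f \<in> Sigma_part X P \<longleftrightarrow> inj_on (block_map f) P"
proof -
  have "block_map f ` P \<subseteq> P"
    using assms block_map_in_P by blast
  then show ?thesis
    using Sigma_part_iff assms finite_P endo_inj_surj eq_card_imp_inj_on by metis
qed

lemma Sigma_partI:
  assumes "f \<in> X \<rightarrow>\<^sub>E X" and "\<And>x. x \<in> X \<Longrightarrow> block (f x) = \<psi> (block x)" and "\<psi> ` P = P"
  shows "f \<in> Sigma_part X P"
  using T_partI[OF assms(1,2)] assms(3) Sigma_part_iff by (simp cong: image_cong)

lemma Sigma_part_subset_T_part: "Sigma_part X P \<subseteq> T_part X P"
  by (auto simp: Sigma_part_def)

lemma compose_T_part:
  assumes "f \<in> T_part X P" "g \<in> T_part X P"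
  shows "compose X g f \<in> T_part X P"
    and "B \<in> P \<Longrightarrow> block_map (compose X g f) B = block_map g (block_map f B)"
proof -
  have PiE: "compose X g f \<in> X \<rightarrow>\<^sub>E X"
    using assms T_part_in_X by (simp add: compose_def restrict_PiE_iff)
  have blk: "block (compose X g f x) = block_map g (block_map f (block x))" if "x \<in> X" for x
    using that assms T_part_block T_part_in_X by (simp add: compose_eq)
  show "compose X g f \<in> T_part X P" using T_partI(1)[OF PiE blk] .
  show "B \<in> P \<Longrightarrow> block_map (compose X g f) B = block_map g (block_map f B)"
    using T_partI(2)[OF PiE blk] .
qed

lemma sgen_subset_T_part:
  assumes "S \<subseteq> T_part X P" shows "sgen X S \<subseteq> T_part X P"
proof
  fix f assume "f \<in> sgen X S"
  then show "f \<in> T_part X P"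
    by induction (use assms compose_T_part in auto)
qed

lemma finite_T_part: "finite (T_part X P)"
proof (rule finite_subset)
  show "T_part X P \<subseteq> X \<rightarrow>\<^sub>E X" using T_part_PiE by blast
  show "finite (X \<rightarrow>\<^sub>E X)" by (intro finite_PiE finite_X)
qed

section \<open>Factoring through \<open>\<Sigma>(X,\<P>)\<close>\<close>

lemma exists_perm_block_map_factor:
  assumes f: "f \<in> T_part X P" and h: "h \<in> T_part X P"
    and block_ker: "\<And>B B'. B \<in> P \<Longrightarrow> B' \<in> P \<Longrightarrow>
      block_map h B = block_map h B' \<longleftrightarrow> block_map f B = block_map f B'"
  shows "\<exists>\<tau>. bij_betw \<tau> P P \<and> (\<forall>B\<in>P. \<tau> (block_map h B) = block_map f B)"
proof -
  define g where "g E = block_map f (inv_into P (block_map h) E)" for E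
  have g: "g (block_map h B) = block_map f B" if "B \<in> P" for B
  proof -
    let ?B = "inv_into P (block_map h) (block_map h B)"
    have "?B \<in> P" "block_map h ?B = block_map h B"
      using that by (simp_all add: inv_into_into f_inv_into_f)
    then show ?thesis
      unfolding g_def using block_ker[OF _ that] by simp
  qed
  have g_inj: "inj_on g (block_map h ` P)"
  proof (rule inj_onI)
    fix E E' assume E: "E \<in> block_map h ` P" and E': "E' \<in> block_map h ` P" and "g E = g E'"
    obtain B B' where B: "B \<in> P" "E = block_map h B" and B': "B' \<in> P" "E' = block_map h B'"
      using E E' by blast
    have "block_map f B = block_map f B'"
      using \<open>g E = g E'\<close> g B B' by simp
    then show "E = E'"
      using block_ker[OF B(1) B'(1)] B(2) B'(2) by simp
  qed
  have g_range: "g ` block_map h ` P \<subseteq> P"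
  proof
    fix E assume "E \<in> g ` block_map h ` P"
    then obtain B where "B \<in> P" "E = g (block_map h B)"
      by blast
    then show "E \<in> P"
      using g block_map_in_P[OF f] by simp
  qed
  have h_range: "block_map h ` P \<subseteq> P"
    using block_map_in_P[OF h] by blast
  obtain \<tau> where \<tau>: "bij_betw \<tau> P P" "\<forall>E\<in>block_map h ` P. \<tau> E = g E"
    using extend_inj_on_to_bij_betw[OF finite_P finite_P refl h_range g_inj g_range] by blast
  have "\<forall>B\<in>P. \<tau> (block_map h B) = block_map f B"
    using \<tau>(2) g by simp
  with \<tau>(1) show ?thesis
    by blast
qed

lemma factor_through_Sigma:
  assumes f: "f \<in> T_part X P" and h: "h \<in> T_part X P"
    and ker: "\<And>x y. x \<in> X \<Longrightarrow> y \<in> X \<Longrightarrow> h x = h y \<Longrightarrow> f x = f y"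
    and block_ker: "\<And>B B'. B \<in> P \<Longrightarrow> B' \<in> P \<Longrightarrow>
      block_map h B = block_map h B' \<longleftrightarrow> block_map f B = block_map f B'"
  shows "\<exists>\<sigma>\<in>Sigma_part X P. f = compose X \<sigma> h"
proof -
  obtain \<tau> where \<tau>: "bij_betw \<tau> P P" "\<And>B. B \<in> P \<Longrightarrow> \<tau> (block_map h B) = block_map f B"
    using exists_perm_block_map_factor[OF f h block_ker] by blast
  define \<sigma> where "\<sigma> = (\<lambda>z\<in>X. if z \<in> h ` X then f (inv_into X h z) else rep (\<tau> (block z)))"
  have \<sigma>_h: "\<sigma> (h x) = f x" if "x \<in> X" for x
  proof -
    have "inv_into X h (h x) \<in> X" "h (inv_into X h (h x)) = h x"
      using that by (simp_all add: inv_into_into f_inv_into_f)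
    then have "f (inv_into X h (h x)) = f x"
      using ker that by blast
    then show ?thesis
      unfolding \<sigma>_def using that T_part_in_X[OF h] by simp
  qed
  have \<sigma>_block: "\<sigma> z \<in> X \<and> block (\<sigma> z) = \<tau> (block z)" if "z \<in> X" for z
  proof (cases "z \<in> h ` X")
    case True
    then obtain x where x: "x \<in> X" "z = h x"
      by blast
    then show ?thesis
      using \<sigma>_h \<tau>(2) T_part_block[OF h] T_part_block[OF f] T_part_in_X[OF f] block_in_P by simp
  next
    case False
    have "\<tau> (block z) \<in> P"
      using \<tau>(1) block_in_P[OF that] bij_betwE by blast
    then show ?thesis
      unfolding \<sigma>_def using that False rep_in_X block_rep by simp
  qed
  have "\<sigma> \<in> Sigma_part X P"
  proof (rule Sigma_partI)
    show "\<sigma> \<in> X \<rightarrow>\<^sub>E X"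
      using \<sigma>_block unfolding \<sigma>_def by (simp add: restrict_PiE_iff)
    show "block (\<sigma> z) = \<tau> (block z)" if "z \<in> X" for z
      using \<sigma>_block that by blast
    show "\<tau> ` P = P"
      using \<tau>(1) by (simp add: bij_betw_def)
  qed
  moreover have "f = compose X \<sigma> h"
  proof (rule ext)
    fix x
    show "f x = compose X \<sigma> h x"
    proof (cases "x \<in> X")
      case True
      then show ?thesis
        using \<sigma>_h by (simp add: compose_eq)
    next
      case False
      then show ?thesis
        using PiE_arb[OF T_part_PiE[OF f] False] by (simp add: compose_def)
    qed
  qed
  ultimately show ?thesis
    by blast
qed

lemma exists_Sigma_lift:
  assumes "\<And>x. x \<in> X \<Longrightarrow> \<rho> x \<in> h ` block x"
  shows "\<exists>R\<in>Sigma_part X P. \<forall>x\<in>X. block (R x) = block x \<and> h (R x) = \<rho> x"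
proof -
  define R where "R = (\<lambda>x\<in>X. inv_into (block x) h (\<rho> x))"
  have R: "R x \<in> block x \<and> h (R x) = \<rho> x" if "x \<in> X" for x
    using assms[OF that] unfolding R_def by (simp add: that inv_into_into f_inv_into_f)
  have "R \<in> Sigma_part X P"
  proof (rule Sigma_partI[where \<psi> = id])
    show "R \<in> X \<rightarrow>\<^sub>E X"
      using R block_subset unfolding R_def by (auto simp: restrict_PiE_iff)
    show "block (R x) = id (block x)" if "x \<in> X" for x
      using R[OF that] block_eqI block_in_P[OF that] by simp
  qed simp
  then show ?thesis
    using R block_eqI block_in_P by blast
qed

section \<open>Block permutations and collapsed types\<close>

definition inj_on_blocks :: "('a \<Rightarrow> 'a) \<Rightarrow> bool" where
  "inj_on_blocks f \<longleftrightarrow> (\<forall>B\<in>P. inj_on f B)"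

definition block_perm :: "('a \<Rightarrow> 'a) \<Rightarrow> bool" where
  "block_perm R \<longleftrightarrow> R \<in> X \<rightarrow>\<^sub>E X \<and> inj_on R X \<and> (\<forall>B\<in>P. R ` B \<in> P)"

lemma block_perm_T_part:
  assumes "block_perm R"
  shows "R \<in> T_part X P" and "B \<in> P \<Longrightarrow> block_map R B = R ` B"
proof -
  show "R \<in> T_part X P"
    using assms unfolding block_perm_def T_part_def by blast
  assume "B \<in> P"
  then have "R (rep B) \<in> R ` B" "R ` B \<in> P"
    using assms rep_in unfolding block_perm_def by blast+
  then show "block_map R B = R ` B"
    unfolding block_map_def using block_eqI by simp
qed

lemma block_perm_Sigma_part:
  assumes "block_perm R"
  shows "R \<in> Sigma_part X P"
proof -
  have R: "R \<in> T_part X P" "inj_on R X"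
    using assms block_perm_T_part(1) unfolding block_perm_def by blast+
  have "inj_on (block_map R) P"
  proof (rule inj_onI)
    fix B B' assume B: "B \<in> P" "B' \<in> P" "block_map R B = block_map R B'"
    then have "R (rep B) \<in> R ` B'"
      using block_perm_T_part(2)[OF assms] rep_in by (metis imageI)
    then obtain y where "y \<in> B'" "R (rep B) = R y" by blast
    then have "rep B = y"
      using R(2) rep_in_X[OF B(1)] P_subset[OF B(2)] unfolding inj_on_def by blast
    then show "B = B'"
      using parts_eq[OF B(1,2)] rep_in[OF B(1)] \<open>y \<in> B'\<close> by blast
  qed
  then show ?thesis
    using Sigma_part_iff_inj[OF R(1)] by blast
qed

lemma Sigma_part_block_perm:
  assumes h: "h \<in> Sigma_part X P" and inj: "inj_on_blocks h"
  shows "block_perm h"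
proof -
  have hT: "h \<in> T_part X P"
    using h Sigma_part_subset_T_part by blast
  have bm_inj: "inj_on (block_map h) P"
    using Sigma_part_iff_inj[OF hT] h by blast
  have same_block: "block x = block y" if "x \<in> X" "y \<in> X" "block (h x) = block (h y)" for x y
    using that bm_inj T_part_block[OF hT] block_in_P unfolding inj_on_def by metis
  have "inj_on h X"
  proof (rule inj_onI)
    fix x y assume xy: "x \<in> X" "y \<in> X" "h x = h y"
    then have "x \<in> block x" "y \<in> block x"
      using same_block in_block by metis+
    then show "x = y"
      using inj block_in_P[OF xy(1)] xy(3) unfolding inj_on_blocks_def inj_on_def by blast
  qed
  then have hX: "h ` X = X"
    using endo_inj_surj[OF finite_X] T_part_in_X[OF hT] by blast
  have "h ` B = block_map h B" if B: "B \<in> P" for B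
  proof
    show "h ` B \<subseteq> block_map h B"
      using image_part_subset_block_map[OF hT B] .
    show "block_map h B \<subseteq> h ` B"
    proof
      fix z assume z: "z \<in> block_map h B"
      then have "z \<in> X"
        using P_subset block_map_in_P[OF hT B] by blast
      then obtain x where x: "x \<in> X" "z = h x"
        using hX by blast
      have "block (h x) = block (h (rep B))"
        using z x block_eqI block_map_in_P[OF hT B] unfolding block_map_def by simp
      then have "block x = B"
        using same_block x(1) rep_in_X[OF B] block_rep[OF B] by metis
      then show "z \<in> h ` B"
        using x in_block by blast
    qed
  qed
  then show ?thesis
    unfolding block_perm_def using T_part_PiE[OF hT] \<open>inj_on h X\<close> block_map_in_P[OF hT] by simp
qed

lemma block_perm_card_image: "block_perm R \<Longrightarrow> B \<in> P \<Longrightarrow> card (R ` B) = card B"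
  unfolding block_perm_def using P_subset card_image inj_on_subset by metis

definition collapsed_types :: "('a \<Rightarrow> 'a) \<Rightarrow> nat set set" where
  "collapsed_types f = {{card B, card B'} | B B'.
     B \<in> P \<and> B' \<in> P \<and> B \<noteq> B' \<and> block_map f B = block_map f B'}"

lemma collapsed_typesI:
  "B \<in> P \<Longrightarrow> B' \<in> P \<Longrightarrow> B \<noteq> B' \<Longrightarrow> block_map f B = block_map f B'
    \<Longrightarrow> {card B, card B'} \<in> collapsed_types f"
  unfolding collapsed_types_def by blast

lemma collapsed_typesE:
  assumes "t \<in> collapsed_types f"
  obtains B B' where "B \<in> P" "B' \<in> P" "B \<noteq> B'" "block_map f B = block_map f B'"
    "t = {card B, card B'}"
  using assms unfolding collapsed_types_def by blast

lemma collapsed_types_empty_iff: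
  "f \<in> T_part X P \<Longrightarrow> collapsed_types f = {} \<longleftrightarrow> f \<in> Sigma_part X P"
  unfolding Sigma_part_iff_inj collapsed_types_def inj_on_def by blast

lemma collapsed_types_compose_mono:
  assumes "f \<in> T_part X P" "g \<in> T_part X P"
  shows "collapsed_types f \<subseteq> collapsed_types (compose X g f)"
proof
  fix t assume "t \<in> collapsed_types f"
  then obtain B B' where B: "B \<in> P" "B' \<in> P" "B \<noteq> B'" "block_map f B = block_map f B'"
    and t: "t = {card B, card B'}"
    by (rule collapsed_typesE)
  then have "block_map (compose X g f) B = block_map (compose X g f) B'"
    using compose_T_part(2)[OF assms] by simp
  then show "t \<in> collapsed_types (compose X g f)"
    unfolding t by (rule collapsed_typesI[OF B(1-3)])
qed

lemma collapsed_types_reindex: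
  assumes \<pi>: "bij_betw \<pi> P P" and card: "\<And>B. B \<in> P \<Longrightarrow> card (\<pi> B) = card B"
    and bm: "\<And>B. B \<in> P \<Longrightarrow> block_map f B = block_map g (\<pi> B)"
  shows "collapsed_types f = collapsed_types g"
proof
  show "collapsed_types f \<subseteq> collapsed_types g"
  proof
    fix t assume "t \<in> collapsed_types f"
    then obtain B B' where B: "B \<in> P" "B' \<in> P" "B \<noteq> B'" "block_map f B = block_map f B'"
      and t: "t = {card B, card B'}"
      by (rule collapsed_typesE)
    have "{card (\<pi> B), card (\<pi> B')} \<in> collapsed_types g"
    proof (rule collapsed_typesI)
      show "\<pi> B \<in> P" "\<pi> B' \<in> P"
        using bij_betwE[OF \<pi>] B(1,2) by blast+
      show "\<pi> B \<noteq> \<pi> B'"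
        using bij_betw_imp_inj_on[OF \<pi>] B(1-3) unfolding inj_on_def by blast
      show "block_map g (\<pi> B) = block_map g (\<pi> B')"
        using bm B(1,2,4) by simp
    qed
    then show "t \<in> collapsed_types g"
      using card B(1,2) t by simp
  qed
  show "collapsed_types g \<subseteq> collapsed_types f"
  proof
    fix t assume "t \<in> collapsed_types g"
    then obtain D D' where D: "D \<in> P" "D' \<in> P" "D \<noteq> D'" "block_map g D = block_map g D'"
      and t: "t = {card D, card D'}"
      by (rule collapsed_typesE)
    have "D \<in> \<pi> ` P" "D' \<in> \<pi> ` P"
      using D(1,2) bij_betw_imp_surj_on[OF \<pi>] by simp_all
    then obtain B B' where B: "B \<in> P" "B' \<in> P" "D = \<pi> B" "D' = \<pi> B'"
      by blast
    have "{card B, card B'} \<in> collapsed_types f"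
    proof (rule collapsed_typesI)
      show "B \<noteq> B'"
        using B(3,4) D(3) by auto
      show "block_map f B = block_map f B'"
        using bm B D(4) by simp
    qed (use B in blast)+
    then show "t \<in> collapsed_types f"
      using card B t by simp
  qed
qed

lemma collapsed_types_compose_block_perm:
  assumes h: "block_perm h" and g: "g \<in> T_part X P"
  shows "collapsed_types (compose X g h) = collapsed_types g"
proof (rule collapsed_types_reindex)
  have hT: "h \<in> T_part X P"
    using block_perm_T_part(1)[OF h] .
  show "bij_betw (block_map h) P P"
    using block_perm_Sigma_part[OF h] Sigma_part_iff Sigma_part_iff_inj[OF hT]
    unfolding bij_betw_def by blast
  show "card (block_map h B) = card B" if "B \<in> P" for B
    using block_perm_card_image[OF h that] block_perm_T_part(2)[OF h that] by simp
  show "block_map (compose X g h) B = block_map g (block_map h B)" if "B \<in> P" for B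
    using compose_T_part(2)[OF hT g that] .
qed

lemma inj_on_blocks_composeD:
  assumes "inj_on_blocks (compose X g f)"
  shows "inj_on_blocks f"
  unfolding inj_on_blocks_def
proof
  fix B assume B: "B \<in> P"
  have "inj_on (g \<circ> f) B"
    using assms B P_subset[OF B] unfolding inj_on_blocks_def
    by (simp add: inj_on_def compose_eq subset_iff)
  then show "inj_on f B"
    by (rule inj_on_imageI2)
qed

lemma inj_on_blocks_compose_block_permD:
  assumes h: "block_perm h" and gh: "inj_on_blocks (compose X g h)"
  shows "inj_on_blocks g"
  unfolding inj_on_blocks_def
proof
  fix D assume "D \<in> P"
  then obtain B where B: "B \<in> P" "D = h ` B"
    using block_perm_Sigma_part[OF h] Sigma_part_iff block_perm_T_part(2)[OF h] by (metis imageE)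
  have "inj_on (g \<circ> h) B"
    using gh B(1) P_subset[OF B(1)] unfolding inj_on_blocks_def
    by (simp add: inj_on_def compose_eq subset_iff)
  moreover have "inj_on h B"
    using h P_subset[OF B(1)] unfolding block_perm_def by (metis inj_on_subset)
  ultimately show "inj_on g D"
    using B(2) comp_inj_on_iff by blast
qed

lemma inj_on_blocks_compose_block_perm:
  assumes R: "block_perm R" and e: "inj_on_blocks e"
  shows "inj_on_blocks (compose X e R)"
  unfolding inj_on_blocks_def
proof
  fix D assume D: "D \<in> P"
  have "inj_on R D"
    using R P_subset[OF D] unfolding block_perm_def by (metis inj_on_subset)
  moreover have "inj_on e (R ` D)"
    using e R D unfolding inj_on_blocks_def block_perm_def by blast
  ultimately have "inj_on (e \<circ> R) D"
    using comp_inj_on by blast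
  then show "inj_on (compose X e R) D"
    using P_subset[OF D] by (simp add: inj_on_def compose_eq subset_iff)
qed

lemma collapsed_type_in_generators:
  assumes "f \<in> sgen X (Sigma_part X P \<union> W)" and W: "W \<subseteq> T_part X P"
    and "inj_on_blocks f" and "collapsed_types f = {t}"
  shows "\<exists>w\<in>W. collapsed_types w = {t}"
  using assms(1,3,4)
proof induction
  case (base f)
  then show ?case
    using collapsed_types_empty_iff Sigma_part_subset_T_part by blast
next
  case (comp h g)
  have gens: "Sigma_part X P \<union> W \<subseteq> T_part X P"
    using Sigma_part_subset_T_part W by blast
  have hT: "h \<in> T_part X P" and gT: "g \<in> T_part X P"
    using comp.hyps sgen_subset_T_part[OF gens] by blast+
  have h_inj: "inj_on_blocks h"
    using inj_on_blocks_composeD comp.prems(1) .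
  show ?case
  proof (cases "h \<in> Sigma_part X P")
    case False
    then have "collapsed_types h \<noteq> {}"
      using collapsed_types_empty_iff[OF hT] by blast
    moreover have "collapsed_types h \<subseteq> {t}"
      using collapsed_types_compose_mono[OF hT gT] comp.prems(2) by blast
    ultimately show ?thesis
      using comp.IH(1) h_inj by blast
  next
    case True
    then have "block_perm h"
      using Sigma_part_block_perm h_inj by blast
    then show ?thesis
      using comp.IH(2) comp.prems inj_on_blocks_compose_block_permD
        collapsed_types_compose_block_perm gT by metis
  qed
qed

section \<open>Merges\<close>

definition merge :: "'a set \<Rightarrow> ('a \<Rightarrow> 'a) \<Rightarrow> 'a \<Rightarrow> 'a" where
  "merge U \<phi> = (\<lambda>x\<in>X. if x \<in> U then \<phi> x else x)"

lemma merge_T_part: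
  assumes U: "U \<in> P" and C: "C \<in> P" and \<phi>: "\<phi> ` U \<subseteq> C"
  shows "merge U \<phi> \<in> T_part X P"
    and "B \<in> P \<Longrightarrow> block_map (merge U \<phi>) B = (if B = U then C else B)"
proof -
  have "\<phi> x \<in> X" if "x \<in> U" for x
    using that \<phi> P_subset[OF C] by blast
  then have PiE: "merge U \<phi> \<in> X \<rightarrow>\<^sub>E X"
    unfolding merge_def restrict_PiE_iff by simp
  have blk: "block (merge U \<phi> x) = (if block x = U then C else block x)" if "x \<in> X" for x
  proof (cases "x \<in> U")
    case True
    moreover have "\<phi> x \<in> C"
      using True \<phi> by blast
    ultimately show ?thesis
      using that block_eqI[OF U True] block_eqI[OF C] unfolding merge_def by simp
  next
    case False
    then show ?thesis
      using that block_eq_iff[OF U] unfolding merge_def by simp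
  qed
  show "merge U \<phi> \<in> T_part X P"
    using T_partI(1)[OF PiE blk] .
  show "B \<in> P \<Longrightarrow> block_map (merge U \<phi>) B = (if B = U then C else B)"
    using T_partI(2)[OF PiE blk] .
qed

lemma merge_inj_on_blocks:
  assumes U: "U \<in> P" and "inj_on \<phi> U"
  shows "inj_on_blocks (merge U \<phi>)"
  unfolding inj_on_blocks_def
proof
  fix B assume B: "B \<in> P"
  show "inj_on (merge U \<phi>) B"
  proof (cases "B = U")
    case True
    then show ?thesis
      using assms P_subset[OF U] unfolding merge_def inj_on_def by auto
  next
    case False
    then have "B \<inter> U = {}"
      using parts_eq[OF B U] by blast
    then show ?thesis
      using P_subset[OF B] unfolding merge_def inj_on_def by auto
  qed
qed

lemma collapsed_types_merge:
  assumes U: "U \<in> P" and C: "C \<in> P" "U \<noteq> C" and \<phi>: "\<phi> ` U \<subseteq> C"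
  shows "collapsed_types (merge U \<phi>) = {{card U, card C}}"
proof
  have bm: "block_map (merge U \<phi>) B = (if B = U then C else B)" if "B \<in> P" for B
    using merge_T_part(2)[OF U C(1) \<phi> that] .
  show "collapsed_types (merge U \<phi>) \<subseteq> {{card U, card C}}"
  proof
    fix t assume "t \<in> collapsed_types (merge U \<phi>)"
    then obtain B B' where B: "B \<in> P" "B' \<in> P" "B \<noteq> B'"
      "block_map (merge U \<phi>) B = block_map (merge U \<phi>) B'" and t: "t = {card B, card B'}"
      by (rule collapsed_typesE)
    then have "B = U \<and> B' = C \<or> B = C \<and> B' = U"
      using bm by (auto split: if_splits)
    then show "t \<in> {{card U, card C}}"
      using t by (auto simp: insert_commute)
  qed
  have "{card U, card C} \<in> collapsed_types (merge U \<phi>)"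
    by (rule collapsed_typesI[OF U C]) (use bm U C in simp)
  then show "{{card U, card C}} \<subseteq> collapsed_types (merge U \<phi>)"
    by blast
qed

lemma block_perm_of_card_preserving:
  assumes \<pi>: "bij_betw \<pi> P P" and card: "\<And>B. B \<in> P \<Longrightarrow> card (\<pi> B) = card B"
  shows "\<exists>R. block_perm R \<and> (\<forall>B\<in>P. R ` B = \<pi> B)"
proof -
  have \<pi>P: "\<pi> B \<in> P" if "B \<in> P" for B
    using bij_betwE[OF \<pi>] that by blast
  have ex: "\<forall>B\<in>P. \<exists>\<beta>. bij_betw \<beta> B (\<pi> B)"
  proof
    fix B assume B: "B \<in> P"
    show "\<exists>\<beta>. bij_betw \<beta> B (\<pi> B)"
      using finite_same_card_bij[OF finite_part[OF B] finite_part[OF \<pi>P[OF B]]] card[OF B] by simp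
  qed
  then obtain \<beta> where \<beta>: "\<forall>B\<in>P. bij_betw (\<beta> B) B (\<pi> B)"
    using bchoice[OF ex] by blast
  define R where "R = (\<lambda>x\<in>X. \<beta> (block x) x)"
  have R_image: "R ` B = \<pi> B" if B: "B \<in> P" for B
  proof -
    have "R ` B = \<beta> B ` B"
      unfolding R_def using P_subset[OF B] block_eqI[OF B] by (auto simp: image_iff)
    then show ?thesis
      using \<beta> B by (simp add: bij_betw_def)
  qed
  have R_mem: "R x \<in> \<pi> (block x)" if "x \<in> X" for x
    using R_image[OF block_in_P[OF that]] in_block[OF that] by blast
  have "inj_on R X"
  proof (rule inj_onI)
    fix x y assume xy: "x \<in> X" "y \<in> X" "R x = R y"
    have "\<pi> (block x) = \<pi> (block y)"
      using parts_eq[OF \<pi>P[OF block_in_P[OF xy(1)]] \<pi>P[OF block_in_P[OF xy(2)]] R_mem[OF xy(1)]]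
        R_mem[OF xy(2)] xy(3) by simp
    then have same: "block y = block x"
      using bij_betw_imp_inj_on[OF \<pi>] block_in_P xy(1,2) unfolding inj_on_def by blast
    have "inj_on (\<beta> (block x)) (block x)"
      using \<beta> block_in_P[OF xy(1)] bij_betw_imp_inj_on by blast
    moreover have "\<beta> (block x) x = \<beta> (block x) y"
      using xy same unfolding R_def by simp
    ultimately show "x = y"
      using in_block xy(1,2) same unfolding inj_on_def by metis
  qed
  moreover have "R \<in> X \<rightarrow>\<^sub>E X"
    unfolding R_def restrict_PiE_iff
  proof
    fix x assume x: "x \<in> X"
    have "R x \<in> X"
      using R_mem[OF x] P_subset[OF \<pi>P[OF block_in_P[OF x]]] by blast
    then show "\<beta> (block x) x \<in> X"
      using x unfolding R_def by simp
  qed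
  ultimately have "block_perm R"
    unfolding block_perm_def using R_image \<pi>P by simp
  then show ?thesis
    using R_image by blast
qed

lemma exists_block_perm_onto:
  assumes U: "U \<in> P" "C \<in> P" "U \<noteq> C" and A: "A \<in> P" "B \<in> P" "A \<noteq> B"
    and card: "card U = card A" "card C = card B"
  shows "\<exists>R. block_perm R \<and> R ` U = A \<and> R ` C = B"
proof -
  define C' where "C' = transpose U A C"
  define \<pi> where "\<pi> = transpose C' B \<circ> transpose U A"
  have C': "C' \<in> P" "card C' = card B" "C' \<noteq> A"
    using U A card by (auto simp: C'_def transpose_def)
  have "bij_betw \<pi> P P"
    unfolding \<pi>_def using U A C' by (intro bij_betw_trans[of _ P P]) simp_all
  moreover have "card (\<pi> E) = card E" for E
    unfolding \<pi>_def using card C'(2) by (simp add: card_transpose)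
  ultimately obtain R where R: "block_perm R" "\<forall>E\<in>P. R ` E = \<pi> E"
    using block_perm_of_card_preserving by blast
  have "\<pi> U = A"
    unfolding \<pi>_def using C'(3) A(3) by simp
  moreover have "\<pi> C = B"
    unfolding \<pi>_def by (simp add: C'_def)
  ultimately have "R ` U = A" "R ` C = B"
    using R(2) U(1,2) by simp_all
  then show ?thesis
    using R(1) by blast
qed

lemma inj_on_replace_on_target_block:
  assumes U: "U \<in> P" and C: "C \<in> P"
    and h: "h \<in> T_part X P" "inj_on_blocks h"
    and h_blocks: "\<And>B B'. B \<in> P \<Longrightarrow> B' \<in> P \<Longrightarrow>
      block_map h B = block_map h B' \<longleftrightarrow> B = B' \<or> B \<in> {U, C} \<and> B' \<in> {U, C}"
    and \<theta>: "inj_on \<theta> C" "\<theta> ` C \<subseteq> h ` C"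
  shows "inj_on (\<lambda>z. if z \<in> C then \<theta> z else h z) (X - U)"
proof (rule inj_onI)
  let ?\<theta> = "\<lambda>z. if z \<in> C then \<theta> z else h z"
  fix z z' assume z: "z \<in> X - U" and z': "z' \<in> X - U" and eq: "?\<theta> z = ?\<theta> z'"
  have in_image: "?\<theta> w \<in> block_map h (block w)" if "w \<in> X" for w
  proof (cases "w \<in> C")
    case True
    then show ?thesis
      using \<theta>(2) image_part_subset_block_map[OF h(1) C] block_eqI[OF C] by auto
  next
    case False
    then show ?thesis
      using image_part_subset_block_map[OF h(1) block_in_P[OF that]] in_block[OF that] by auto
  qed
  have "block_map h (block z) = block_map h (block z')"
    using parts_eq[OF block_map_in_P[OF h(1)] block_map_in_P[OF h(1)]] in_image eq
      block_in_P z z' by (metis DiffD1)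
  then have blocks: "block z = block z' \<or> block z \<in> {U, C} \<and> block z' \<in> {U, C}"
    using h_blocks block_in_P z z' by blast
  have not_U: "block z \<noteq> U" "block z' \<noteq> U"
    using block_eq_iff[OF U] z z' by blast+
  have C_iff: "block z = C \<longleftrightarrow> z \<in> C" "block z' = C \<longleftrightarrow> z' \<in> C"
    using block_eq_iff[OF C] z z' by blast+
  show "z = z'"
  proof (cases "z \<in> C")
    case True
    then have "z' \<in> C"
      using blocks not_U C_iff by auto
    then show ?thesis
      using True eq \<theta>(1) unfolding inj_on_def by simp
  next
    case False
    then have "block z' = block z" "z' \<notin> C"
      using blocks not_U C_iff by auto
    then show ?thesis
      using False eq h(2) block_in_P[OF DiffD1[OF z]] in_block[OF DiffD1[OF z]]
        in_block[OF DiffD1[OF z']] unfolding inj_on_blocks_def inj_on_def by simp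
  qed
qed

text \<open>
  Since \<open>h\<close> identifies exactly the blocks \<open>U\<close> and \<open>C\<close>, is injective on each, and one of
  \<open>h ` U\<close>, \<open>h ` C\<close> contains the other, there is an \<open>R \<in> \<Sigma>(X,\<P>)\<close> fixing every block with
  \<open>h \<circ> R = \<theta>' \<circ> merge U \<phi>\<close> for some \<open>\<theta>'\<close> injective on \<open>X - U\<close>; so the merge factors
  through \<open>h \<circ> R\<close>.
\<close>

lemma merge_factor:
  assumes U: "U \<in> P" and C: "C \<in> P" "U \<noteq> C" and \<phi>: "\<phi> ` U \<subseteq> C"
    and h: "h \<in> T_part X P" "inj_on_blocks h"
    and h_blocks: "\<And>B B'. B \<in> P \<Longrightarrow> B' \<in> P \<Longrightarrow>
      block_map h B = block_map h B' \<longleftrightarrow> B = B' \<or> B \<in> {U, C} \<and> B' \<in> {U, C}"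
    and nested: "h ` U \<subseteq> h ` C \<or> h ` C \<subseteq> h ` U"
  shows "\<exists>\<sigma>\<in>Sigma_part X P. \<exists>R\<in>Sigma_part X P. merge U \<phi> = compose X \<sigma> (compose X h R)"
proof -
  let ?m = "merge U \<phi>"
  have h_inj: "inj_on h U" "inj_on h C"
    using h(2) U C(1) unfolding inj_on_blocks_def by blast+
  obtain \<theta> where \<theta>: "bij_betw \<theta> C (h ` C)" "\<theta> ` \<phi> ` U \<subseteq> h ` U"
    using exists_bij_betw_image_nested[OF finite_part[OF U] finite_part[OF C(1)] \<phi> h_inj nested]
    by blast
  define \<theta>' where "\<theta>' z = (if z \<in> C then \<theta> z else h z)" for z
  have m_outside_U: "?m x \<in> X - U" if "x \<in> X" for x
    using that \<phi> P_subset[OF C(1)] parts_eq[OF U C(1)] C(2) unfolding merge_def by auto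
  have lift: "\<theta>' (?m x) \<in> h ` block x" if x: "x \<in> X" for x
  proof -
    consider "x \<in> U" | "x \<in> C" | "x \<notin> U" "x \<notin> C"
      by blast
    then show ?thesis
    proof cases
      case 1
      then have "\<theta>' (?m x) \<in> h ` U"
        using \<theta>(2) \<phi> x unfolding \<theta>'_def merge_def by auto
      then show ?thesis
        using 1 block_eqI[OF U] by simp
    next
      case 2
      then have "x \<notin> U"
        using parts_eq[OF U C(1)] C(2) by blast
      then have "\<theta>' (?m x) \<in> h ` C"
        using 2 \<theta>(1) x bij_betwE unfolding \<theta>'_def merge_def by fastforce
      then show ?thesis
        using 2 block_eqI[OF C(1)] by simp
    qed (use x in_block in \<open>auto simp: \<theta>'_def merge_def\<close>)
  qed
  obtain R where R: "R \<in> Sigma_part X P" "\<And>x. x \<in> X \<Longrightarrow> block (R x) = block x \<and> h (R x) = \<theta>' (?m x)"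
    using exists_Sigma_lift[OF lift] by blast
  let ?k = "compose X h R"
  have RT: "R \<in> T_part X P"
    using R(1) Sigma_part_subset_T_part by blast
  have k_bm: "block_map ?k B = block_map h B" if "B \<in> P" for B
  proof -
    have "block_map R B = B"
      using R(2)[OF rep_in_X[OF that]] block_rep[OF that] unfolding block_map_def by simp
    then show ?thesis
      using compose_T_part(2)[OF RT h(1) that] by simp
  qed
  have inj: "inj_on \<theta>' (X - U)"
    unfolding \<theta>'_def using inj_on_replace_on_target_block[OF U C(1) h h_blocks]
      bij_betw_imp_inj_on[OF \<theta>(1)] bij_betw_imp_surj_on[OF \<theta>(1)] by blast
  have "\<exists>\<sigma>\<in>Sigma_part X P. ?m = compose X \<sigma> ?k"
  proof (rule factor_through_Sigma[OF merge_T_part(1)[OF U C(1) \<phi>] compose_T_part(1)[OF RT h(1)]])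
    show "?m x = ?m y" if "x \<in> X" "y \<in> X" "?k x = ?k y" for x y
      using that R(2) inj m_outside_U unfolding inj_on_def by (simp add: compose_eq)
    show "block_map ?k B = block_map ?k B' \<longleftrightarrow> block_map ?m B = block_map ?m B'"
      if "B \<in> P" "B' \<in> P" for B B'
      using that k_bm h_blocks merge_T_part(2)[OF U C(1) \<phi>] redirect_eq_iff[OF C(2)] by simp
  qed
  then show ?thesis
    using R(1) by blast
qed

lemma exists_block_perm_onto_pair:
  assumes U: "U \<in> P" "C \<in> P" "U \<noteq> C" and A: "A \<in> P" "B \<in> P" "A \<noteq> B"
    and card: "{card U, card C} = {card A, card B}"
  shows "\<exists>R. block_perm R \<and> {R ` U, R ` C} = {A, B}"
proof -
  consider "card U = card A" "card C = card B" | "card U = card B" "card C = card A"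
    using card by (auto simp: doubleton_eq_iff)
  then show ?thesis
  proof cases
    case 1
    then show ?thesis
      using exists_block_perm_onto[OF U A] by blast
  next
    case 2
    then obtain R where "block_perm R" "R ` U = B" "R ` C = A"
      using exists_block_perm_onto[OF U A(2,1) A(3)[symmetric]] by blast
    then show ?thesis
      by (auto simp: insert_commute)
  qed
qed

lemma block_map_merge_after_block_perm:
  assumes R: "block_perm R" "{R ` U, R ` C} = {A, B}" and U: "U \<in> P" "C \<in> P"
    and A: "A \<in> P" "B \<in> P" "A \<noteq> B" and \<iota>: "\<iota> ` A \<subseteq> B" and D: "D \<in> P" "D' \<in> P"
  shows "block_map (compose X (merge A \<iota>) R) D = block_map (compose X (merge A \<iota>) R) D'
    \<longleftrightarrow> D = D' \<or> D \<in> {U, C} \<and> D' \<in> {U, C}"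
proof -
  have RT: "R \<in> T_part X P" and R_bm: "\<And>E. E \<in> P \<Longrightarrow> block_map R E = R ` E"
    using block_perm_T_part[OF R(1)] by blast+
  have R_inj: "inj_on (block_map R) P"
    using block_perm_Sigma_part[OF R(1)] Sigma_part_iff_inj[OF RT] by blast
  have pair: "R ` E \<in> {A, B} \<longleftrightarrow> E \<in> {U, C}" if "E \<in> P" for E
    using R(2) R_inj R_bm that U unfolding inj_on_def by (auto simp: doubleton_eq_iff)
  have "block_map (compose X (merge A \<iota>) R) D = block_map (compose X (merge A \<iota>) R) D'
      \<longleftrightarrow> R ` D = R ` D' \<or> R ` D \<in> {A, B} \<and> R ` D' \<in> {A, B}"
    using compose_T_part(2)[OF RT merge_T_part(1)[OF A(1,2) \<iota>]] merge_T_part(2)[OF A(1,2) \<iota>] R_bm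
      block_map_in_P[OF RT] D redirect_eq_iff[OF A(3)] by simp
  also have "\<dots> \<longleftrightarrow> D = D' \<or> D \<in> {U, C} \<and> D' \<in> {U, C}"
    using pair D R_inj R_bm unfolding inj_on_def by auto
  finally show ?thesis .
qed

lemma merge_in_generated:
  assumes Sigma: "Sigma_part X P \<subseteq> G" and closed: "\<And>f g. f \<in> G \<Longrightarrow> g \<in> G \<Longrightarrow> compose X g f \<in> G"
    and A: "A \<in> P" "B \<in> P" "A \<noteq> B" and \<iota>: "inj_on \<iota> A" "\<iota> ` A \<subseteq> B" and w: "merge A \<iota> \<in> G"
    and U: "U \<in> P" "C \<in> P" "U \<noteq> C" and \<phi>: "\<phi> ` U \<subseteq> C"
    and card: "{card U, card C} = {card A, card B}"
  shows "merge U \<phi> \<in> G"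
proof -
  obtain R0 where R0: "block_perm R0" "{R0 ` U, R0 ` C} = {A, B}"
    using exists_block_perm_onto_pair[OF U A card] by blast
  let ?e = "merge A \<iota>"
  let ?h = "compose X ?e R0"
  have hT: "?h \<in> T_part X P"
    using compose_T_part(1)[OF block_perm_T_part(1)[OF R0(1)] merge_T_part(1)[OF A(1,2) \<iota>(2)]] .
  have "?h \<in> G"
    using closed[OF _ w] Sigma block_perm_Sigma_part[OF R0(1)] by blast
  moreover have "?h ` U \<subseteq> ?h ` C \<or> ?h ` C \<subseteq> ?h ` U"
  proof -
    have e_A: "?e ` A = \<iota> ` A"
      using P_subset[OF A(1)] unfolding merge_def by (intro image_cong) auto
    have "?e x = x" if "x \<in> B" for x
      using that P_subset[OF A(2)] parts_eq[OF A(1,2)] A(3) unfolding merge_def by auto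
    then have e_B: "?e ` B = B"
      by simp
    have h_img: "?h ` U = ?e ` R0 ` U" "?h ` C = ?e ` R0 ` C"
      using image_compose[OF P_subset[OF U(1)]] image_compose[OF P_subset[OF U(2)]] by simp_all
    from R0(2) consider "R0 ` U = A" "R0 ` C = B" | "R0 ` U = B" "R0 ` C = A"
      by (auto simp: doubleton_eq_iff)
    then show ?thesis
      using e_A e_B h_img \<iota>(2) by cases simp_all
  qed
  moreover have "inj_on_blocks ?h"
    using inj_on_blocks_compose_block_perm[OF R0(1) merge_inj_on_blocks[OF A(1) \<iota>(1)]] .
  ultimately obtain \<sigma> R where "\<sigma> \<in> Sigma_part X P" "R \<in> Sigma_part X P"
    and "merge U \<phi> = compose X \<sigma> (compose X ?h R)"
    using merge_factor[OF U \<phi> hT _ block_map_merge_after_block_perm[OF R0 U(1,2) A \<iota>(2)]]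
    by blast
  moreover have "compose X ?h R \<in> G"
    using closed[OF _ \<open>?h \<in> G\<close>] Sigma \<open>R \<in> Sigma_part X P\<close> by blast
  ultimately show ?thesis
    using closed Sigma by (metis subsetD)
qed

section \<open>Generating \<open>T(X,\<P>)\<close>\<close>

definition on_blocks :: "'a set set \<Rightarrow> ('a \<Rightarrow> 'a) \<Rightarrow> 'a \<Rightarrow> 'a" where
  "on_blocks Z f = (\<lambda>x\<in>X. if block x \<in> Z then f x else x)"

lemma on_blocks_Sigma_part:
  assumes f: "f \<in> T_part X P" and Z: "Z \<subseteq> P" "block_map f ` Z = Z"
  shows "on_blocks Z f \<in> Sigma_part X P"
proof (rule Sigma_partI)
  show "on_blocks Z f \<in> X \<rightarrow>\<^sub>E X"
    unfolding on_blocks_def restrict_PiE_iff using T_part_in_X[OF f] by simp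
  show "block (on_blocks Z f x) = (if block x \<in> Z then block_map f (block x) else block x)"
    if "x \<in> X" for x
    unfolding on_blocks_def using that T_part_block[OF f] by simp
  show "(\<lambda>B. if B \<in> Z then block_map f B else B) ` P = P"
    using image_permute_invariant_part[OF Z] .
qed

lemma factor_through_merge_on_blocks:
  assumes f: "f \<in> T_part X P" and Z: "block_map f ` Z = Z"
    and U: "U \<in> P" "U \<notin> Z" "block_map f U \<in> Z"
    and g: "g \<in> X \<rightarrow>\<^sub>E X" "\<And>x. x \<in> X \<Longrightarrow> block x \<in> Z \<Longrightarrow> g x = x"
      "\<And>x. x \<in> X \<Longrightarrow> block x \<notin> Z \<Longrightarrow> block x \<noteq> U \<Longrightarrow> g x = f x"
  shows "f = compose X g (compose X (merge U f) (on_blocks Z f))"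
proof (rule ext)
  fix x
  show "f x = compose X g (compose X (merge U f) (on_blocks Z f)) x"
  proof (cases "x \<in> X")
    case False
    then show ?thesis
      using PiE_arb[OF T_part_PiE[OF f] False] by (simp add: compose_def)
  next
    case x: True
    have fx: "f x \<in> X" "block (f x) = block_map f (block x)"
      using T_part_in_X[OF f x] T_part_block[OF f x] by simp_all
    show ?thesis
    proof (cases "block x \<in> Z \<or> block x = U")
      case True
      then have "block (f x) \<in> Z"
        using fx(2) Z U(3) by (metis imageI)
      moreover have "merge U f (on_blocks Z f x) = f x"
      proof (cases "block x \<in> Z")
        case True
        then have "f x \<notin> U"
          using \<open>block (f x) \<in> Z\<close> block_eqI[OF U(1)] U(2) by metis
        then show ?thesis
          using True fx(1) x unfolding on_blocks_def merge_def by simp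
      next
        case False
        then show ?thesis
          using \<open>block x \<in> Z \<or> block x = U\<close> x block_eq_iff[OF U(1) x]
          unfolding on_blocks_def merge_def by simp
      qed
      ultimately show ?thesis
        using x fx(1) g(2) by (simp add: compose_eq)
    next
      case False
      then have "merge U f (on_blocks Z f x) = x"
        using x block_eq_iff[OF U(1) x] unfolding on_blocks_def merge_def by simp
      then show ?thesis
        using x False g(3) by (simp add: compose_eq)
    qed
  qed
qed

text \<open>
  In the proof, \<open>Z\<close> is a set of blocks permuted by the block map of \<open>f\<close> and \<open>U \<notin> Z\<close> a block
  mapped into \<open>Z\<close>. After applying \<open>f\<close> on the blocks of \<open>Z\<close> and merging \<open>U\<close> into its image
  block, the remaining factor \<open>g\<close> can fix the blocks of \<open>Z\<close> and send \<open>U\<close> to a block missed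
  by \<open>f\<close>, so \<open>g\<close> misses one block fewer.
\<close>

lemma reduce_defect:
  assumes f: "f \<in> T_part X P" and not_Sigma: "f \<notin> Sigma_part X P"
  obtains U C \<psi> \<tau> g where "U \<in> P" "C \<in> P" "U \<noteq> C" "\<psi> ` U \<subseteq> C"
    and "\<tau> \<in> Sigma_part X P" and "g \<in> T_part X P"
    and "card (P - block_map g ` P) < card (P - block_map f ` P)"
    and "f = compose X g (compose X (merge U \<psi>) \<tau>)"
proof -
  let ?\<phi> = "block_map f"
  have \<phi>P: "?\<phi> ` P \<subseteq> P"
    using block_map_in_P[OF f] by blast
  moreover have "?\<phi> ` P \<noteq> P"
    using not_Sigma f Sigma_part_iff by blast
  ultimately obtain D where D: "D \<in> P - ?\<phi> ` P"
    by blast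
  obtain Z U where Z: "Z \<subseteq> P" "?\<phi> ` Z = Z" and U: "U \<in> P - Z" "?\<phi> U \<in> Z"
    using exists_invariant_subset_entered[OF finite_P \<phi>P D] by blast
  have C: "?\<phi> U \<in> P" "U \<noteq> ?\<phi> U" "f ` U \<subseteq> ?\<phi> U"
    using Z(1) U image_part_subset_block_map[OF f] by auto
  define g where "g = (\<lambda>x\<in>X. if block x \<in> Z then x else if block x = U then rep D else f x)"
  define \<psi> where "\<psi> B = (if B \<in> Z then B else if B = U then D else ?\<phi> B)" for B
  have g_PiE: "g \<in> X \<rightarrow>\<^sub>E X"
    unfolding g_def restrict_PiE_iff using T_part_in_X[OF f] rep_in_X[of D] D by simp
  have g_block: "block (g x) = \<psi> (block x)" if "x \<in> X" for x
    unfolding g_def \<psi>_def using that T_part_block[OF f] block_rep[of D] D by simp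
  have "block_map g ` P = \<psi> ` P"
    using T_partI(2)[OF g_PiE g_block] by (rule image_cong[OF refl])
  also have "\<dots> = insert D (?\<phi> ` P)"
    unfolding \<psi>_def using image_redirect[OF Z U] .
  finally have "P - block_map g ` P = (P - ?\<phi> ` P) - {D}"
    by blast
  then have "card (P - block_map g ` P) < card (P - ?\<phi> ` P)"
    using card_Diff1_less[OF finite_Diff[OF finite_P] D] by simp
  moreover have "f = compose X g (compose X (merge U f) (on_blocks Z f))"
    using U by (intro factor_through_merge_on_blocks[OF f Z(2)] g_PiE) (auto simp: g_def)
  ultimately show ?thesis
    using that[OF _ C on_blocks_Sigma_part[OF f Z] T_partI(1)[OF g_PiE g_block]] U(1) by blast
qed

lemma T_part_subset_generated:
  assumes Sigma: "Sigma_part X P \<subseteq> G"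
    and merges: "\<And>U C \<phi>. U \<in> P \<Longrightarrow> C \<in> P \<Longrightarrow> U \<noteq> C \<Longrightarrow> \<phi> ` U \<subseteq> C \<Longrightarrow> merge U \<phi> \<in> G"
    and closed: "\<And>f g. f \<in> G \<Longrightarrow> g \<in> G \<Longrightarrow> compose X g f \<in> G"
  shows "T_part X P \<subseteq> G"
proof
  fix f assume "f \<in> T_part X P"
  then show "f \<in> G"
  proof (induction "card (P - block_map f ` P)" arbitrary: f rule: less_induct)
    case less
    show ?case
    proof (cases "f \<in> Sigma_part X P")
      case True
      then show ?thesis
        using Sigma by blast
    next
      case False
      then obtain U C \<psi> \<tau> g where U: "U \<in> P" "C \<in> P" "U \<noteq> C" "\<psi> ` U \<subseteq> C"
        and \<tau>: "\<tau> \<in> Sigma_part X P" and g: "g \<in> T_part X P"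
        and defect: "card (P - block_map g ` P) < card (P - block_map f ` P)"
        and f: "f = compose X g (compose X (merge U \<psi>) \<tau>)"
        using reduce_defect[OF less.prems] by blast
      have "compose X (merge U \<psi>) \<tau> \<in> G"
        using closed[OF _ merges[OF U]] \<tau> Sigma by blast
      moreover have "g \<in> G"
        using less.hyps[OF defect g] .
      ultimately show ?thesis
        unfolding f by (rule closed)
    qed
  qed
qed

section \<open>The relative rank\<close>

definition pair_types :: "nat set set" where
  "pair_types = {{card A, card B} | A B. A \<in> P \<and> B \<in> P \<and> A \<noteq> B}"

definition type_witness :: "nat set \<Rightarrow> 'a \<Rightarrow> 'a" where
  "type_witness t = (SOME w. \<exists>A B \<iota>. A \<in> P \<and> B \<in> P \<and> A \<noteq> B \<and> t = {card A, card B}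
     \<and> inj_on \<iota> A \<and> \<iota> ` A \<subseteq> B \<and> w = merge A \<iota>)"

lemma type_witnessE:
  assumes "t \<in> pair_types"
  obtains A B \<iota> where "A \<in> P" "B \<in> P" "A \<noteq> B" "t = {card A, card B}"
    "inj_on \<iota> A" "\<iota> ` A \<subseteq> B" "type_witness t = merge A \<iota>"
proof -
  obtain A B where AB: "A \<in> P" "B \<in> P" "A \<noteq> B" "t = {card A, card B}"
    using assms unfolding pair_types_def by blast
  have "\<exists>A B \<iota>. A \<in> P \<and> B \<in> P \<and> A \<noteq> B \<and> t = {card A, card B} \<and> inj_on \<iota> A \<and> \<iota> ` A \<subseteq> B"
  proof (cases "card A \<le> card B")
    case True
    then obtain \<iota> where "inj_on \<iota> A" "\<iota> ` A \<subseteq> B"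
      using card_le_inj[OF finite_part[OF AB(1)] finite_part[OF AB(2)]] by blast
    then show ?thesis
      using AB by blast
  next
    case False
    then have "card B \<le> card A"
      by simp
    then obtain \<iota> where "inj_on \<iota> B" "\<iota> ` B \<subseteq> A"
      using card_le_inj[OF finite_part[OF AB(2)] finite_part[OF AB(1)]] by blast
    moreover have "t = {card B, card A}"
      using AB(4) by (simp add: insert_commute)
    ultimately show ?thesis
      using AB(1-3) by blast
  qed
  then have "\<exists>w. \<exists>A B \<iota>. A \<in> P \<and> B \<in> P \<and> A \<noteq> B \<and> t = {card A, card B}
      \<and> inj_on \<iota> A \<and> \<iota> ` A \<subseteq> B \<and> w = merge A \<iota>"
    by blast
  then have "\<exists>A B \<iota>. A \<in> P \<and> B \<in> P \<and> A \<noteq> B \<and> t = {card A, card B}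
      \<and> inj_on \<iota> A \<and> \<iota> ` A \<subseteq> B \<and> type_witness t = merge A \<iota>"
    unfolding type_witness_def by (rule someI_ex)
  then obtain A' B' \<iota>' where "A' \<in> P" "B' \<in> P" "A' \<noteq> B'" "t = {card A', card B'}"
    "inj_on \<iota>' A'" "\<iota>' ` A' \<subseteq> B'" "type_witness t = merge A' \<iota>'"
    by blast
  then show ?thesis
    by (rule that)
qed

lemma type_witness_props:
  assumes "t \<in> pair_types"
  shows "type_witness t \<in> T_part X P" and "inj_on_blocks (type_witness t)"
    and "collapsed_types (type_witness t) = {t}"
proof -
  obtain A B \<iota> where AB: "A \<in> P" "B \<in> P" "A \<noteq> B" "t = {card A, card B}"
    and \<iota>: "inj_on \<iota> A" "\<iota> ` A \<subseteq> B" and w: "type_witness t = merge A \<iota>"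
    using type_witnessE[OF assms] by blast
  show "type_witness t \<in> T_part X P"
    unfolding w using merge_T_part(1)[OF AB(1,2) \<iota>(2)] .
  show "inj_on_blocks (type_witness t)"
    unfolding w using merge_inj_on_blocks[OF AB(1) \<iota>(1)] .
  show "collapsed_types (type_witness t) = {t}"
    using collapsed_types_merge[OF AB(1-3) \<iota>(2)] w AB(4) by simp
qed

lemma inj_on_type_witness: "inj_on type_witness pair_types"
proof (rule inj_onI)
  fix s t assume "s \<in> pair_types" "t \<in> pair_types" "type_witness s = type_witness t"
  then have "{s} = {t}"
    using type_witness_props(3) by metis
  then show "s = t"
    by simp
qed

lemma generated_by_type_witnesses:
  "sgen X (Sigma_part X P \<union> type_witness ` pair_types) = T_part X P"
proof
  let ?G = "sgen X (Sigma_part X P \<union> type_witness ` pair_types)"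
  have gens: "Sigma_part X P \<union> type_witness ` pair_types \<subseteq> T_part X P"
    using Sigma_part_subset_T_part type_witness_props(1) by blast
  then show "?G \<subseteq> T_part X P"
    by (rule sgen_subset_T_part)
  have Sigma: "Sigma_part X P \<subseteq> ?G"
    by (auto intro: sgen.base)
  have closed: "\<And>f g. f \<in> ?G \<Longrightarrow> g \<in> ?G \<Longrightarrow> compose X g f \<in> ?G"
    by (rule sgen.comp)
  have "merge U \<phi> \<in> ?G" if U: "U \<in> P" "C \<in> P" "U \<noteq> C" and \<phi>: "\<phi> ` U \<subseteq> C" for U C \<phi>
  proof -
    have t: "{card U, card C} \<in> pair_types"
      unfolding pair_types_def using U by blast
    then obtain A B \<iota> where AB: "A \<in> P" "B \<in> P" "A \<noteq> B" "{card U, card C} = {card A, card B}"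
      and \<iota>: "inj_on \<iota> A" "\<iota> ` A \<subseteq> B" and w: "type_witness {card U, card C} = merge A \<iota>"
      by (rule type_witnessE)
    have "type_witness {card U, card C} \<in> ?G"
      using t by (auto intro: sgen.base)
    then have "merge A \<iota> \<in> ?G"
      using w by simp
    then show ?thesis
      using merge_in_generated[OF Sigma closed AB(1-3) \<iota> _ U \<phi> AB(4)] by blast
  qed
  then show "T_part X P \<subseteq> ?G"
    using T_part_subset_generated[OF Sigma _ closed] by blast
qed

lemma card_pair_types_le:
  assumes W: "W \<subseteq> T_part X P" "finite W" and gen: "sgen X (Sigma_part X P \<union> W) = T_part X P"
  shows "card pair_types \<le> card W"
proof -
  have "\<forall>t\<in>pair_types. \<exists>w\<in>W. collapsed_types w = {t}"
  proof
    fix t assume t: "t \<in> pair_types"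
    then have "type_witness t \<in> sgen X (Sigma_part X P \<union> W)"
      using gen type_witness_props(1) by blast
    then show "\<exists>w\<in>W. collapsed_types w = {t}"
      using collapsed_type_in_generators[OF _ W(1)] type_witness_props(2,3)[OF t] by blast
  qed
  then obtain c where c: "\<forall>t\<in>pair_types. c t \<in> W \<and> collapsed_types (c t) = {t}"
    using bchoice[of pair_types "\<lambda>t w. w \<in> W \<and> collapsed_types w = {t}"] by blast
  have "inj_on c pair_types"
  proof (rule inj_onI)
    fix s t assume "s \<in> pair_types" "t \<in> pair_types" "c s = c t"
    then have "{s} = {t}"
      using c by metis
    then show "s = t"
      by simp
  qed
  moreover have "c ` pair_types \<subseteq> W"
    using c by blast
  ultimately show ?thesis
    using card_inj_on_le[OF _ _ W(2)] by blast
qed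

lemma relrank_eq_card_pair_types:
  "relrank X (T_part X P) (Sigma_part X P) = card pair_types"
  unfolding relrank_def
proof (rule Least_equality)
  let ?W = "type_witness ` pair_types"
  have "?W \<subseteq> T_part X P"
    using type_witness_props(1) by blast
  moreover have "finite ?W"
    using calculation finite_T_part finite_subset by blast
  moreover have "card ?W = card pair_types"
    using card_image[OF inj_on_type_witness] .
  ultimately show "\<exists>W. W \<subseteq> T_part X P \<and> finite W \<and> card W = card pair_types
      \<and> sgen X (Sigma_part X P \<union> W) = T_part X P"
    using generated_by_type_witnesses by blast
next
  fix n
  assume "\<exists>W. W \<subseteq> T_part X P \<and> finite W \<and> card W = n
    \<and> sgen X (Sigma_part X P \<union> W) = T_part X P"
  then show "card pair_types \<le> n"
    using card_pair_types_le by blast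
qed

lemma pair_types_eq:
  "pair_types = {S. S \<subseteq> card ` P \<and> card S = 2}
     \<union> (\<lambda>m. {m}) ` {m. \<exists>B1\<in>P. \<exists>B2\<in>P. B1 \<noteq> B2 \<and> card B1 = m \<and> card B2 = m}"
    (is "_ = ?two \<union> (\<lambda>m. {m}) ` ?R")
proof
  show "pair_types \<subseteq> ?two \<union> (\<lambda>m. {m}) ` ?R"
  proof
    fix t assume "t \<in> pair_types"
    then obtain A B where AB: "A \<in> P" "B \<in> P" "A \<noteq> B" "t = {card A, card B}"
      unfolding pair_types_def by blast
    show "t \<in> ?two \<union> (\<lambda>m. {m}) ` ?R"
    proof (cases "card A = card B")
      case True
      then have "card A \<in> ?R" "t = {card A}"
        using AB by auto
      then show ?thesis
        by blast
    next
      case False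
      then have "t \<in> ?two"
        using AB by auto
      then show ?thesis
        by blast
    qed
  qed
  show "?two \<union> (\<lambda>m. {m}) ` ?R \<subseteq> pair_types"
  proof
    fix t assume "t \<in> ?two \<union> (\<lambda>m. {m}) ` ?R"
    then consider "t \<in> ?two" | "t \<in> (\<lambda>m. {m}) ` ?R"
      by blast
    then show "t \<in> pair_types"
    proof cases
      case 1
      then obtain a b where "t = {a, b}" "a \<noteq> b" "a \<in> card ` P" "b \<in> card ` P"
        by (auto simp: card_2_iff)
      then show ?thesis
        unfolding pair_types_def by blast
    next
      case 2
      then obtain m B1 B2 where "t = {m}" "B1 \<in> P" "B2 \<in> P" "B1 \<noteq> B2" "card B1 = m" "card B2 = m"
        by blast
      then show ?thesis
        unfolding pair_types_def by blast
    qed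
  qed
qed

lemma card_pair_types:
  "card pair_types = (card (card ` P) choose 2)
     + card {m. \<exists>B1\<in>P. \<exists>B2\<in>P. B1 \<noteq> B2 \<and> card B1 = m \<and> card B2 = m}"
proof -
  let ?R = "{m. \<exists>B1\<in>P. \<exists>B2\<in>P. B1 \<noteq> B2 \<and> card B1 = m \<and> card B2 = m}"
  let ?two = "{S. S \<subseteq> card ` P \<and> card S = 2}"
  have "finite ?two"
    using finite_P by (simp add: finite_subset[of _ "Pow (card ` P)"] subset_iff)
  moreover have "finite ((\<lambda>m. {m}) ` ?R)"
    using finite_subset[of ?R "card ` P"] finite_P by blast
  moreover have "?two \<inter> (\<lambda>m. {m}) ` ?R = {}"
    by auto
  moreover have "card ?two = card (card ` P) choose 2"
    using n_subsets[of "card ` P" 2] finite_P by simp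
  moreover have "card ((\<lambda>m. {m}) ` ?R) = card ?R"
    by (rule card_image) (simp add: inj_on_def)
  ultimately show ?thesis
    unfolding pair_types_eq by (simp add: card_Un_disjoint)
qed

end

theorem theorem3p3:
  fixes X :: "'a set" and P :: "'a set set"
  assumes "finite X" and "X \<noteq> {}" and "partition_on X P"
  shows "relrank X (T_part X P) (Sigma_part X P)
           = (card (card ` P) choose 2)
             + card {m. \<exists>B1\<in>P. \<exists>B2\<in>P. B1 \<noteq> B2 \<and> card B1 = m \<and> card B2 = m}"
proof -
  interpret finite_partition X P
    using assms(1,3) by unfold_locales
  show ?thesis
    using relrank_eq_card_pair_types card_pair_types by simp
qed

end
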